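(* In the biased controlled social learning model described in the context, for all $b_1,b_2\in[0,1]$ with $b_1\le b_2$, $V^*_B(b_1)\le V^*_B(b_2)$.
   Context: A binary state $\omega\in\{G,B\}$ is drawn once. Agents $i=1,2,\dots$ act in sequence; a planner chooses precision $q_i\in[0.5,1]$ and agent $i$ receives a private signal $s_i$ with $\mathbb{P}(s_i=\omega)=q_i$, conditionally independent given $\omega$. Let $y(b,q)=1+2bq-b-q$, $z(b,q)=b+q-2bq$. With public belief $b_i$, agent $i$ takes $a_i=s_i$ if $1-q_i\le b_i\le q_i$, $G$ if $b_i>q_i$, $B$ if $b_i<1-q_i$; the public belief becomes $\frac{q_ib_i}{y(b_i,q_i)}$ (if $s_i=G$) or $\frac{(1-q_i)b_i}{z(b_i,q_i)}$ (if $s_i=B$) when $1-q_i\le b_i\le q_i$, and stays $b_i$ otherwise. The biased planner (who wants action $G$) has baseline $p\in[0.5,1)$, cost $\beta:[0,1]\to[0,\infty)$ non-negative, increasing, continuous, concave with $\beta(0)=0$, $C>0$, and instantaneous reward $r_B(b,q)=-\beta(|q-p|)-C\,\mathbb{P}(a_i=B\mid b,q)$. Policies are deterministic Markov maps $\pi:[0,1]\to[0.5,1]$; for $\delta\in[0,1)$, $V^\pi_B(b)=\mathbb{E}[\sum_{i\ge1}\delta^{i-1}r_B(b_i,\pi(b_i))\mid b_1=b]$ and $V^*_B=\sup_\pi V^\pi_B$. *)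

theory Defs
  imports "HOL-Probability.Probability"
begin

definition yy :: "real \<Rightarrow> real \<Rightarrow> real" where
  "yy b q = 1 + 2*b*q - b - q"

definition zz :: "real \<Rightarrow> real \<Rightarrow> real" where
  "zz b q = b + q - 2*b*q"

definition probB :: "real \<Rightarrow> real \<Rightarrow> real" where
  "probB b q = (if 1 - q \<le> b \<and> b \<le> q then zz b q else if b > q then 0 else 1)"

definition rB :: "(real \<Rightarrow> real) \<Rightarrow> real \<Rightarrow> real \<Rightarrow> real \<Rightarrow> real \<Rightarrow> real" where
  "rB \<beta> p C b q = - \<beta> \<bar>q - p\<bar> - C * probB b q"

text \<open>One-step transition of the public belief (signal s = G with probability y(b,q)).\<close>
definition trans :: "real \<Rightarrow> real \<Rightarrow> real pmf" where
  "trans b q = (if 1 - q \<le> b \<and> b \<le> q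
     then map_pmf (\<lambda>s. if s then q * b / yy b q else (1 - q) * b / zz b q) (bernoulli_pmf (yy b q))
     else return_pmf b)"

text \<open>Distribution of the public belief b_{n+1} under policy pi, starting at b_1 = b.\<close>
primrec belief_dist :: "(real \<Rightarrow> real) \<Rightarrow> real \<Rightarrow> nat \<Rightarrow> real pmf" where
  "belief_dist \<pi> b 0 = return_pmf b"
| "belief_dist \<pi> b (Suc n) = bind_pmf (belief_dist \<pi> b n) (\<lambda>b'. trans b' (\<pi> b'))"

definition policies :: "(real \<Rightarrow> real) set" where
  "policies = {\<pi>. \<forall>b\<in>{0..1}. \<pi> b \<in> {1/2..1}}"

definition VB :: "(real \<Rightarrow> real) \<Rightarrow> real \<Rightarrow> real \<Rightarrow> real \<Rightarrow> (real \<Rightarrow> real) \<Rightarrow> real \<Rightarrow> real" where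
  "VB \<beta> p C \<delta> \<pi> b =
     (\<Sum>i. \<delta> ^ i * measure_pmf.expectation (belief_dist \<pi> b i) (\<lambda>b'. rB \<beta> p C b' (\<pi> b')))"

definition VB_opt :: "(real \<Rightarrow> real) \<Rightarrow> real \<Rightarrow> real \<Rightarrow> real \<Rightarrow> real \<Rightarrow> real" where
  "VB_opt \<beta> p C \<delta> b = (SUP \<pi>\<in>policies. VB \<beta> p C \<delta> \<pi> b)"

end

theory Submission
  imports Defs
begin

text \<open>Let \<open>D\<close> be the supremum of \<open>V*(x) - V*(y)\<close> over \<open>0 \<le> x \<le> y \<le> 1\<close>; it suffices to show
  \<open>D \<le> \<delta> D\<close>. Fix \<open>x \<le> y\<close> and a nearly optimal first precision \<open>q\<close> at \<open>x\<close>. If \<open>y > p\<close>, then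
  \<open>V*(y) = 0\<close> is the largest possible value. If \<open>x < 1 - q\<close>, agent \<open>x\<close> takes action \<open>B\<close> for sure
  and \<open>V*(x)\<close> is nearly the smallest possible value \<open>-C/(1-\<delta>)\<close>. Otherwise the planner at \<open>y\<close> can
  use \<open>q\<close> (or \<open>y\<close> itself when \<open>x \<le> q < y\<close>): the cost is no larger, action \<open>B\<close> is no more likely,
  and the two posteriors after \<open>y\<close> can be coupled with those after \<open>x\<close> so that each lies above its
  partner. With the Bellman inequality for \<open>V*\<close> at \<open>y\<close> this gives
  \<open>V*(x) - V*(y) \<le> \<delta> D + \<epsilon>\<close>.\<close>

lemma integral_bind_pmf_bounded:
  fixes f :: "'b \<Rightarrow> real"
  assumes "\<And>x. \<bar>f x\<bar> \<le> B"
  shows "measure_pmf.expectation (bind_pmf M N) f = measure_pmf.expectation M (\<lambda>x. measure_pmf.expectation (N x) f)"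
  using measurable_measure_pmf[of N] unfolding measure_pmf_bind
  by (subst integral_bind[where K="count_space UNIV" and B=B and B'=1])
     (use assms in \<open>auto intro!: prob_space_imp_subprob_space\<close>)

lemma discounted_sum_bounds:
  fixes a :: "nat \<Rightarrow> real"
  assumes "0 \<le> \<delta>" "\<delta> < 1" "\<And>i. L \<le> a i" "\<And>i. a i \<le> U"
  shows "summable (\<lambda>i. \<delta> ^ i * a i)"
    and "L / (1 - \<delta>) \<le> (\<Sum>i. \<delta> ^ i * a i)"
    and "(\<Sum>i. \<delta> ^ i * a i) \<le> U / (1 - \<delta>)"
proof -
  have geo: "(\<lambda>i. \<delta> ^ i * c) sums (c / (1 - \<delta>))" for c
    using sums_mult2[OF geometric_sums, of \<delta> c] assms(1,2) by simp
  have "\<bar>a i\<bar> \<le> \<bar>L\<bar> + \<bar>U\<bar>" for i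
    using assms(3,4)[of i] by (auto simp: abs_le_iff)
  then have "norm (\<delta> ^ i * a i) \<le> \<delta> ^ i * (\<bar>L\<bar> + \<bar>U\<bar>)" for i
    using assms(1) by (simp add: abs_mult mult_left_mono)
  then show sum: "summable (\<lambda>i. \<delta> ^ i * a i)"
    using geo by (blast intro: summable_comparison_test' sums_summable)
  have lower: "\<delta> ^ i * L \<le> \<delta> ^ i * a i" and upper: "\<delta> ^ i * a i \<le> \<delta> ^ i * U" for i
    using assms(1,3,4) by (simp_all add: mult_left_mono)
  show "L / (1 - \<delta>) \<le> (\<Sum>i. \<delta> ^ i * a i)"
    using lower geo summable_sums[OF sum] by (rule sums_le)
  show "(\<Sum>i. \<delta> ^ i * a i) \<le> U / (1 - \<delta>)"
    using upper summable_sums[OF sum] geo by (rule sums_le)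
qed

lemma two_point_mixture_gap:
  fixes V :: "'a \<Rightarrow> real"
  assumes "0 \<le> a" "a \<le> a'" "a' \<le> 1"
    and "0 < a \<Longrightarrow> V g - V g' \<le> D"
    and "a' < 1 \<Longrightarrow> V h - V h' \<le> D"
    and "a < a' \<Longrightarrow> V h - V g' \<le> D"
  shows "(a * V g + (1 - a) * V h) - (a' * V g' + (1 - a') * V h') \<le> D"
proof -
  have "a * (V g - V g') \<le> a * D"
    using assms by (cases "a = 0") (auto intro: mult_left_mono)
  moreover have "(1 - a') * (V h - V h') \<le> (1 - a') * D"
    using assms by (cases "a' = 1") (auto intro: mult_left_mono)
  moreover have "(a' - a) * (V h - V g') \<le> (a' - a) * D"
    using assms by (cases "a = a'") (auto intro: mult_left_mono)
  ultimately show ?thesis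
    by (simp add: algebra_simps)
qed

definition follows :: "real \<Rightarrow> real \<Rightarrow> bool" where
  "follows b q \<longleftrightarrow> 1 - q \<le> b \<and> b \<le> q"

definition post_G :: "real \<Rightarrow> real \<Rightarrow> real" where
  "post_G b q = q * b / yy b q"

definition post_B :: "real \<Rightarrow> real \<Rightarrow> real" where
  "post_B b q = (1 - q) * b / zz b q"

definition expect_next :: "real \<Rightarrow> real \<Rightarrow> (real \<Rightarrow> real) \<Rightarrow> real" where
  "expect_next b q W =
     (if follows b q then yy b q * W (post_G b q) + zz b q * W (post_B b q) else W b)"

lemma yy_eq: "yy b q = q * b + (1 - q) * (1 - b)"
  unfolding yy_def by algebra

lemma zz_eq: "zz b q = (1 - q) * b + q * (1 - b)"
  unfolding zz_def by algebra

lemma zz_eq_1_minus_yy: "zz b q = 1 - yy b q"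
  unfolding yy_def zz_def by simp

lemma yy_in_unit:
  assumes "b \<in> {0..1}" "q \<in> {0..1}"
  shows "yy b q \<in> {0..1}"
proof -
  have "q * b \<le> q" "(1 - q) * (1 - b) \<le> 1 - q"
    using assms by (auto intro: mult_left_le mult_right_le_one_le)
  moreover have "0 \<le> q * b" "0 \<le> (1 - q) * (1 - b)"
    using assms by auto
  ultimately show ?thesis
    unfolding yy_eq by auto
qed

lemma zz_in_unit: "b \<in> {0..1} \<Longrightarrow> q \<in> {0..1} \<Longrightarrow> zz b q \<in> {0..1}"
  using yy_in_unit unfolding zz_eq_1_minus_yy by auto

lemma post_G_in_unit:
  assumes "b \<in> {0..1}" "q \<in> {0..1}"
  shows "post_G b q \<in> {0..1}"
proof -
  have "q * b \<le> yy b q" "0 \<le> q * b"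
    using assms unfolding yy_eq by auto
  then show ?thesis
    unfolding post_G_def by (cases "yy b q = 0") (auto simp: divide_le_eq_1)
qed

lemma post_B_in_unit:
  assumes "b \<in> {0..1}" "q \<in> {0..1}"
  shows "post_B b q \<in> {0..1}"
proof -
  have "(1 - q) * b \<le> zz b q" "0 \<le> (1 - q) * b"
    using assms unfolding zz_eq by auto
  then show ?thesis
    unfolding post_B_def by (cases "zz b q = 0") (auto simp: divide_le_eq_1)
qed

lemma post_G_mono:
  assumes "0 \<le> x" "x \<le> y" "y \<le> 1" "0 \<le> q" "q \<le> q'" "q' \<le> 1"
    and "0 < yy x q" "0 < yy y q'"
  shows "post_G x q \<le> post_G y q'"
proof -
  have "q * x * ((1 - q') * (1 - y)) \<le> q' * y * ((1 - q) * (1 - x))"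
  proof (rule mult_mono)
    show "q * x \<le> q' * y" "(1 - q') * (1 - y) \<le> (1 - q) * (1 - x)"
      using assms by (auto intro: mult_mono)
  qed (use assms in auto)
  moreover have "q' * y * yy x q - q * x * yy y q'
      = q' * y * ((1 - q) * (1 - x)) - q * x * ((1 - q') * (1 - y))"
    unfolding yy_eq by algebra
  ultimately have "q * x * yy y q' \<le> q' * y * yy x q"
    by simp
  then show ?thesis
    unfolding post_G_def using assms(7,8) by (simp add: field_simps)
qed

lemma post_B_mono:
  assumes "x \<le> y" "0 \<le> q" "q \<le> 1" "0 < zz x q" "0 < zz y q"
  shows "post_B x q \<le> post_B y q"
proof -
  have "(1 - q) * y * zz x q - (1 - q) * x * zz y q = q * (1 - q) * (y - x)"
    unfolding zz_def by algebra
  moreover have "0 \<le> q * (1 - q) * (y - x)"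
    using assms by auto
  ultimately have "(1 - q) * x * zz y q \<le> (1 - q) * y * zz x q"
    by simp
  then show ?thesis
    unfolding post_B_def using assms(4,5) by (simp add: field_simps)
qed

lemma post_B_le_half:
  assumes "0 \<le> x" "x \<le> q" "0 < zz x q"
  shows "post_B x q \<le> 1 / 2"
proof -
  have "(1 - q) * x \<le> q * (1 - x)"
    using assms(2) by (simp add: algebra_simps)
  then have "2 * ((1 - q) * x) \<le> zz x q"
    unfolding zz_eq by linarith
  then show ?thesis
    unfolding post_B_def using assms(3) by (simp add: field_simps)
qed

lemma post_B_self: "0 < y \<Longrightarrow> y < 1 \<Longrightarrow> post_B y y = 1 / 2"
  unfolding post_B_def zz_def by (simp add: field_simps)

lemma post_B_le_prior:
  assumes "0 \<le> x" "x \<le> 1" "1/2 \<le> q" "0 < zz x q"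
  shows "post_B x q \<le> x"
proof -
  have "zz x q - (1 - q) = (1 - x) * (2 * q - 1)"
    unfolding zz_def by algebra
  moreover have "0 \<le> (1 - x) * (2 * q - 1)"
    using assms by simp
  ultimately have "1 - q \<le> zz x q"
    by linarith
  then have "(1 - q) * x \<le> x * zz x q"
    using assms(1) by (simp add: mult.commute mult_left_mono)
  then show ?thesis
    unfolding post_B_def using assms(4) by (simp add: divide_le_eq)
qed

lemma prior_le_post_G:
  assumes "0 \<le> y" "y \<le> 1" "1/2 \<le> q" "0 < yy y q"
  shows "y \<le> post_G y q"
proof -
  have "q - yy y q = (1 - y) * (2 * q - 1)"
    unfolding yy_def by algebra
  moreover have "0 \<le> (1 - y) * (2 * q - 1)"
    using assms by simp
  ultimately have "yy y q \<le> q"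
    by linarith
  then have "y * yy y q \<le> q * y"
    using mult_left_mono[of "yy y q" q y] assms(1) by (simp add: mult.commute)
  then show ?thesis
    unfolding post_G_def using assms(4) by (simp add: le_divide_eq)
qed

lemma expectation_trans:
  assumes "b \<in> {0..1}" "q \<in> {0..1}"
  shows "measure_pmf.expectation (trans b q) W = expect_next b q W"
  using yy_in_unit[OF assms]
  unfolding trans_def expect_next_def follows_def post_G_def post_B_def zz_eq_1_minus_yy
  by auto

lemma set_pmf_trans:
  assumes "b \<in> {0..1}" "q \<in> {0..1}"
  shows "set_pmf (trans b q) \<subseteq> {0..1}"
  using post_G_in_unit[OF assms] post_B_in_unit[OF assms] assms
  unfolding trans_def post_G_def post_B_def by auto

lemma expect_next_mono:
  assumes "b \<in> {0..1}" "q \<in> {0..1}" "\<And>x. x \<in> {0..1} \<Longrightarrow> W x \<le> W' x"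
  shows "expect_next b q W \<le> expect_next b q W'"
  using assms(3)[OF post_G_in_unit[OF assms(1,2)]] assms(3)[OF post_B_in_unit[OF assms(1,2)]]
    assms(3)[OF assms(1)] yy_in_unit[OF assms(1,2)] zz_in_unit[OF assms(1,2)]
  unfolding expect_next_def by (auto intro!: add_mono mult_left_mono)

lemma expect_next_cong:
  assumes "b \<in> {0..1}" "q \<in> {0..1}" "\<And>x. x \<in> {0..1} \<Longrightarrow> W x = W' x"
  shows "expect_next b q W = expect_next b q W'"
  using expect_next_mono[OF assms(1,2)] assms(3) by (metis order_antisym order_refl)

lemma expect_next_add_const: "expect_next b q (\<lambda>x. W x + c) = expect_next b q W + c"
  unfolding expect_next_def zz_eq_1_minus_yy by (simp add: algebra_simps)

lemma expect_next_scale: "expect_next b q (\<lambda>x. c * W x) = c * expect_next b q W"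
  unfolding expect_next_def by (simp add: algebra_simps)

lemma expect_next_suminf:
  assumes "\<And>x. summable (\<lambda>n. f n x)"
  shows "summable (\<lambda>n. expect_next b q (f n))"
    and "expect_next b q (\<lambda>x. \<Sum>n. f n x) = (\<Sum>n. expect_next b q (f n))"
  using assms unfolding expect_next_def
  by (cases "follows b q"; simp add: suminf_add[symmetric] suminf_mult summable_mult summable_add)+

text \<open>Couple the two signal distributions: \<open>G\<close> with \<open>G\<close> and \<open>B\<close> with \<open>B\<close> on their common mass, and the
  extra mass of \<open>G\<close> at \<open>y\<close> with \<open>B\<close> at \<open>x\<close>. The last pair is ordered because a \<open>B\<close> signal lowers
  and a \<open>G\<close> signal raises the belief.\<close>
lemma expect_next_gap:
  fixes V :: "real \<Rightarrow> real"
  assumes gap: "\<And>u v. 0 \<le> u \<Longrightarrow> u \<le> v \<Longrightarrow> v \<le> 1 \<Longrightarrow> V u - V v \<le> D"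
    and "x \<le> y" "q \<in> {1/2..1}" "q' \<in> {1/2..1}" "follows x q" "follows y q'"
    and "zz y q' \<le> zz x q"
    and G: "0 < yy x q \<Longrightarrow> post_G x q \<le> post_G y q'"
    and B: "0 < zz y q' \<Longrightarrow> post_B x q \<le> post_B y q'"
  shows "expect_next x q V - expect_next y q' V \<le> D"
proof -
  have x: "x \<in> {0..1}" and y: "y \<in> {0..1}" and q: "q \<in> {0..1}" "q' \<in> {0..1}"
    using assms(2-6) unfolding follows_def by auto
  note unit = post_G_in_unit[OF x q(1)] post_G_in_unit[OF y q(2)]
    post_B_in_unit[OF x q(1)] post_B_in_unit[OF y q(2)]
  have "(yy x q * V (post_G x q) + (1 - yy x q) * V (post_B x q))
      - (yy y q' * V (post_G y q') + (1 - yy y q') * V (post_B y q')) \<le> D"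
  proof (rule two_point_mixture_gap)
    show "0 \<le> yy x q" "yy x q \<le> yy y q'" "yy y q' \<le> 1"
      using yy_in_unit[OF x q(1)] yy_in_unit[OF y q(2)] assms(7) by (auto simp: zz_eq_1_minus_yy)
    show "V (post_G x q) - V (post_G y q') \<le> D" if "0 < yy x q"
      using gap G[OF that] unit by auto
    show "V (post_B x q) - V (post_B y q') \<le> D" if "yy y q' < 1"
      using gap B unit that by (auto simp: zz_eq_1_minus_yy)
    show "V (post_B x q) - V (post_G y q') \<le> D" if "yy x q < yy y q'"
    proof (rule gap)
      have "0 < zz x q" "0 < yy y q'"
        using that yy_in_unit[OF x q(1)] yy_in_unit[OF y q(2)] by (auto simp: zz_eq_1_minus_yy)
      then have "post_B x q \<le> x" "y \<le> post_G y q'"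
        using x y assms(3,4) by (auto intro: post_B_le_prior prior_le_post_G)
      then show "post_B x q \<le> post_G y q'"
        using assms(2) by linarith
    qed (use unit in auto)
  qed
  then show ?thesis
    using assms(5,6) unfolding expect_next_def zz_eq_1_minus_yy by simp
qed

lemma zz_antimono:
  assumes "x \<le> y" "1/2 \<le> q"
  shows "zz y q \<le> zz x q"
proof -
  have "zz x q - zz y q = (y - x) * (2 * q - 1)"
    unfolding zz_def by algebra
  moreover have "0 \<le> (y - x) * (2 * q - 1)"
    using assms by auto
  ultimately show ?thesis
    by simp
qed

lemma zz_self_le:
  assumes "x \<le> q" "1/2 \<le> q" "q \<le> y"
  shows "zz y y \<le> zz x q"
proof -
  have "zz x q - 2 * q * (1 - q) = (2 * q - 1) * (q - x)"
    and "2 * q * (1 - q) - zz y y = 2 * (y - q) * (q + y - 1)"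
    unfolding zz_def by algebra+
  moreover have "0 \<le> (2 * q - 1) * (q - x)" "0 \<le> 2 * (y - q) * (q + y - 1)"
    using assms by auto
  ultimately show ?thesis
    by linarith
qed

lemma expect_next_gap_same_precision:
  fixes V :: "real \<Rightarrow> real"
  assumes gap: "\<And>u v. 0 \<le> u \<Longrightarrow> u \<le> v \<Longrightarrow> v \<le> 1 \<Longrightarrow> V u - V v \<le> D"
    and "x \<le> y" "q \<in> {1/2..1}" "follows x q" "follows y q"
  shows "expect_next x q V - expect_next y q V \<le> D"
proof -
  have zz: "zz y q \<le> zz x q"
    using assms(2,3) by (intro zz_antimono) auto
  show ?thesis
  proof (rule expect_next_gap[OF gap assms(2,3,3,4,5) zz])
    show "post_G x q \<le> post_G y q" if "0 < yy x q"
      using that zz assms(2-5) unfolding follows_def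
      by (intro post_G_mono) (auto simp: zz_eq_1_minus_yy)
    show "post_B x q \<le> post_B y q" if "0 < zz y q"
      using that zz assms(2,3) by (intro post_B_mono) auto
  qed
qed

lemma expect_next_gap_self_precision:
  fixes V :: "real \<Rightarrow> real"
  assumes gap: "\<And>u v. 0 \<le> u \<Longrightarrow> u \<le> v \<Longrightarrow> v \<le> 1 \<Longrightarrow> V u - V v \<le> D"
    and "q < y" "y < 1" "q \<in> {1/2..1}" "follows x q"
  shows "expect_next x q V - expect_next y y V \<le> D"
proof -
  have x: "0 \<le> x" "x \<le> q"
    using assms(4,5) unfolding follows_def by auto
  have y: "y \<in> {1/2..1}" "follows y y"
    using assms(2-4) unfolding follows_def by auto
  have zz: "zz y y \<le> zz x q"
    using x assms(2,4) by (intro zz_self_le) auto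
  have zz_pos: "0 < zz y y"
    unfolding zz_def using assms(2-4) by (simp add: algebra_simps)
  show ?thesis
  proof (rule expect_next_gap[OF gap _ assms(4) y(1) assms(5) y(2) zz])
    show "x \<le> y"
      using x assms(2) by simp
    show "post_G x q \<le> post_G y y" if "0 < yy x q"
      using that zz x assms(2-4) by (intro post_G_mono) (auto simp: zz_eq_1_minus_yy)
    show "post_B x q \<le> post_B y y"
      using post_B_le_half[of x q] post_B_self[of y] zz zz_pos x assms(2-4) by auto
  qed
qed

lemma probB_in_unit:
  assumes "b \<in> {0..1}" "q \<in> {0..1}"
  shows "probB b q \<in> {0..1}"
  using zz_in_unit[OF assms] unfolding probB_def by auto

lemma rB_follows: "follows b q \<Longrightarrow> rB \<beta> p C b q = - \<beta> \<bar>q - p\<bar> - C * zz b q"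
  unfolding rB_def probB_def follows_def by simp

lemma rB_above: "q < b \<Longrightarrow> rB \<beta> p C b q = - \<beta> \<bar>q - p\<bar>"
  unfolding rB_def probB_def by simp

lemma rB_below: "1/2 \<le> q \<Longrightarrow> b < 1 - q \<Longrightarrow> rB \<beta> p C b q = - \<beta> \<bar>q - p\<bar> - C"
  unfolding rB_def probB_def by auto

lemma expect_next_not_follows: "\<not> follows b q \<Longrightarrow> expect_next b q W = W b"
  unfolding expect_next_def by simp

lemma policies_range: "\<pi> \<in> policies \<Longrightarrow> b \<in> {0..1} \<Longrightarrow> \<pi> b \<in> {1/2..1}"
  unfolding policies_def by blast

lemma belief_dist_Suc_first:
  "belief_dist \<pi> b (Suc n) = bind_pmf (trans b (\<pi> b)) (\<lambda>b'. belief_dist \<pi> b' n)"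
proof (induction n arbitrary: b)
  case 0
  then show ?case by (simp add: bind_return_pmf bind_return_pmf')
next
  case (Suc n)
  then show ?case by (simp add: bind_assoc_pmf)
qed

lemma set_pmf_belief_dist:
  assumes "\<pi> \<in> policies" "b \<in> {0..1}"
  shows "set_pmf (belief_dist \<pi> b n) \<subseteq> {0..1}"
proof (induction n)
  case 0
  then show ?case using assms(2) by simp
next
  case (Suc n)
  have step: "set_pmf (trans z (\<pi> z)) \<subseteq> {0..1}" if "z \<in> {0..1}" for z
    using policies_range[OF assms(1) that] that by (intro set_pmf_trans) auto
  show ?case
  proof
    fix x assume "x \<in> set_pmf (belief_dist \<pi> b (Suc n))"
    then obtain z where "z \<in> set_pmf (belief_dist \<pi> b n)" "x \<in> set_pmf (trans z (\<pi> z))"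
      by auto
    with Suc step show "x \<in> {0..1}"
      by blast
  qed
qed

locale biased_planner =
  fixes \<beta> :: "real \<Rightarrow> real" and p C \<delta> :: real
  assumes p_ge_half: "1/2 \<le> p" and p_lt_1: "p < 1"
    and \<beta>_nonneg: "\<And>x. x \<in> {0..1} \<Longrightarrow> 0 \<le> \<beta> x"
    and \<beta>_mono: "mono_on {0..1} \<beta>"
    and \<beta>_0: "\<beta> 0 = 0"
    and C_pos: "0 < C"
    and \<delta>_nonneg: "0 \<le> \<delta>" and \<delta>_lt_1: "\<delta> < 1"
begin

abbreviation Vopt :: "real \<Rightarrow> real" where
  "Vopt \<equiv> VB_opt \<beta> p C \<delta>"

definition qvalue :: "(real \<Rightarrow> real) \<Rightarrow> real \<Rightarrow> real \<Rightarrow> real" where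
  "qvalue W b q = rB \<beta> p C b q + \<delta> * expect_next b q W"

definition reward_bound :: real where
  "reward_bound = \<beta> (1/2) + C"

text \<open>\<^const>\<open>rB\<close> is bounded only for beliefs in \<open>[0,1]\<close>; the belief process never leaves
  \<open>[0,1]\<close>, so cutting the reward off outside it changes no value but makes integrands bounded.\<close>
definition clipped_reward :: "(real \<Rightarrow> real) \<Rightarrow> real \<Rightarrow> real" where
  "clipped_reward \<pi> x = (if x \<in> {0..1} then rB \<beta> p C x (\<pi> x) else 0)"

definition stage_reward :: "(real \<Rightarrow> real) \<Rightarrow> real \<Rightarrow> nat \<Rightarrow> real" where
  "stage_reward \<pi> b n = measure_pmf.expectation (belief_dist \<pi> b n) (clipped_reward \<pi>)"

lemma rB_bounds:
  assumes "b \<in> {0..1}" "q \<in> {1/2..1}"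
  shows "- reward_bound \<le> rB \<beta> p C b q" "rB \<beta> p C b q \<le> 0"
proof -
  have "\<bar>q - p\<bar> \<in> {0..1}" "\<bar>q - p\<bar> \<le> 1/2"
    using assms(2) p_ge_half p_lt_1 by (auto simp: abs_if)
  then have "0 \<le> \<beta> \<bar>q - p\<bar>" "\<beta> \<bar>q - p\<bar> \<le> \<beta> (1/2)"
    using \<beta>_nonneg by (auto intro: mono_onD[OF \<beta>_mono])
  moreover have "0 \<le> C * probB b q" "C * probB b q \<le> C"
    using probB_in_unit[OF assms(1), of q] assms(2) C_pos by (auto intro: mult_left_le)
  ultimately show "- reward_bound \<le> rB \<beta> p C b q" "rB \<beta> p C b q \<le> 0"
    unfolding rB_def reward_bound_def by linarith+
qed

lemma clipped_reward_bounds: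
  assumes "\<pi> \<in> policies"
  shows "- reward_bound \<le> clipped_reward \<pi> x" "clipped_reward \<pi> x \<le> 0"
    and "\<bar>clipped_reward \<pi> x\<bar> \<le> reward_bound"
  using rB_bounds[of x "\<pi> x"] rB_bounds[of 0 1] policies_range[OF assms, of x]
  unfolding clipped_reward_def by auto

lemma stage_reward_bounds:
  assumes "\<pi> \<in> policies" "\<And>x. L \<le> clipped_reward \<pi> x"
  shows "L \<le> stage_reward \<pi> b n" "stage_reward \<pi> b n \<le> 0"
proof -
  have "integrable (measure_pmf (belief_dist \<pi> b n)) (clipped_reward \<pi>)"
    using clipped_reward_bounds(3)[OF assms(1)]
    by (intro measure_pmf.integrable_const_bound[where B=reward_bound]) auto
  then show "L \<le> stage_reward \<pi> b n" "stage_reward \<pi> b n \<le> 0"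
    unfolding stage_reward_def using assms(2) clipped_reward_bounds(2)[OF assms(1)]
    by (auto intro: measure_pmf.integral_ge_const measure_pmf.integral_le_const)
qed

lemma summable_stage_reward:
  "\<pi> \<in> policies \<Longrightarrow> summable (\<lambda>i. \<delta> ^ i * stage_reward \<pi> b i)"
  using \<delta>_nonneg \<delta>_lt_1 stage_reward_bounds clipped_reward_bounds(1)
  by (blast intro: discounted_sum_bounds(1))

lemma VB_eq_stage_sum:
  assumes "\<pi> \<in> policies" "b \<in> {0..1}"
  shows "VB \<beta> p C \<delta> \<pi> b = (\<Sum>i. \<delta> ^ i * stage_reward \<pi> b i)"
proof -
  have "measure_pmf.expectation (belief_dist \<pi> b i) (\<lambda>b'. rB \<beta> p C b' (\<pi> b')) = stage_reward \<pi> b i" for i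
    unfolding stage_reward_def using set_pmf_belief_dist[OF assms]
    by (intro integral_cong_AE) (auto intro!: AE_pmfI simp: clipped_reward_def subset_iff)
  then show ?thesis
    unfolding VB_def by simp
qed

lemma VB_bounds:
  assumes "\<pi> \<in> policies" "b \<in> {0..1}" "\<And>x. L \<le> clipped_reward \<pi> x"
  shows "L / (1 - \<delta>) \<le> VB \<beta> p C \<delta> \<pi> b" "VB \<beta> p C \<delta> \<pi> b \<le> 0"
  unfolding VB_eq_stage_sum[OF assms(1,2)]
  using discounted_sum_bounds(2,3)[OF \<delta>_nonneg \<delta>_lt_1 stage_reward_bounds[OF assms(1,3)]] by simp_all

lemma stage_reward_Suc:
  assumes "\<pi> \<in> policies" "b \<in> {0..1}"
  shows "stage_reward \<pi> b (Suc n) = expect_next b (\<pi> b) (\<lambda>b'. stage_reward \<pi> b' n)"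
proof -
  have "stage_reward \<pi> b (Suc n)
      = measure_pmf.expectation (trans b (\<pi> b)) (\<lambda>b'. stage_reward \<pi> b' n)"
    unfolding stage_reward_def belief_dist_Suc_first
    by (intro integral_bind_pmf_bounded[where B=reward_bound] clipped_reward_bounds(3)[OF assms(1)])
  also have "\<dots> = expect_next b (\<pi> b) (\<lambda>b'. stage_reward \<pi> b' n)"
    using policies_range[OF assms] by (intro expectation_trans[OF assms(2)]) auto
  finally show ?thesis .
qed

lemma VB_recursion:
  assumes "\<pi> \<in> policies" "b \<in> {0..1}"
  shows "VB \<beta> p C \<delta> \<pi> b = qvalue (VB \<beta> p C \<delta> \<pi>) b (\<pi> b)"
proof -
  define S where "S x n = \<delta> ^ n * stage_reward \<pi> x n" for x n
  have q: "\<pi> b \<in> {0..1}"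
    using policies_range[OF assms] by auto
  have summable: "summable (S x)" for x
    unfolding S_def using summable_stage_reward[OF assms(1)] .
  have "VB \<beta> p C \<delta> \<pi> b = S b 0 + (\<Sum>n. S b (Suc n))"
    unfolding VB_eq_stage_sum[OF assms] S_def[abs_def]
    using suminf_split_head[OF summable[unfolded S_def]] by simp
  also have "S b 0 = rB \<beta> p C b (\<pi> b)"
    unfolding S_def stage_reward_def clipped_reward_def using assms(2) by simp
  also have "(\<Sum>n. S b (Suc n)) = (\<Sum>n. \<delta> * expect_next b (\<pi> b) (\<lambda>x. S x n))"
    unfolding S_def stage_reward_Suc[OF assms] expect_next_scale by (simp add: mult.assoc)
  also have "\<dots> = \<delta> * expect_next b (\<pi> b) (\<lambda>x. \<Sum>n. S x n)"
    using expect_next_suminf[OF summable] by (simp add: suminf_mult)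
  also have "expect_next b (\<pi> b) (\<lambda>x. \<Sum>n. S x n) = expect_next b (\<pi> b) (VB \<beta> p C \<delta> \<pi>)"
    unfolding S_def using VB_eq_stage_sum[OF assms(1)] by (intro expect_next_cong[OF assms(2) q]) simp
  finally show ?thesis
    unfolding qvalue_def .
qed

lemma qvalue_mono:
  assumes "b \<in> {0..1}" "q \<in> {0..1}" "\<And>x. x \<in> {0..1} \<Longrightarrow> W x \<le> W' x"
  shows "qvalue W b q \<le> qvalue W' b q"
  unfolding qvalue_def using expect_next_mono[OF assms] \<delta>_nonneg by (simp add: mult_left_mono)

lemma qvalue_add_const: "qvalue (\<lambda>x. W x + c) b q = qvalue W b q + \<delta> * c"
  unfolding qvalue_def expect_next_add_const by (simp add: algebra_simps)

lemma const_policy: "(\<lambda>_. p) \<in> policies"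
  unfolding policies_def using p_ge_half p_lt_1 by auto

lemma bdd_above_VB: "b \<in> {0..1} \<Longrightarrow> bdd_above ((\<lambda>\<pi>. VB \<beta> p C \<delta> \<pi> b) ` policies)"
  using VB_bounds(2) clipped_reward_bounds(1) by (intro bdd_aboveI[where M=0]) blast

lemma VB_le_Vopt: "\<pi> \<in> policies \<Longrightarrow> b \<in> {0..1} \<Longrightarrow> VB \<beta> p C \<delta> \<pi> b \<le> Vopt b"
  unfolding VB_opt_def by (rule cSUP_upper[OF _ bdd_above_VB])

lemma Vopt_le_0: "b \<in> {0..1} \<Longrightarrow> Vopt b \<le> 0"
  unfolding VB_opt_def using VB_bounds(2) clipped_reward_bounds(1) const_policy
  by (intro cSUP_least) blast+

lemma Vopt_ge: 
  assumes "b \<in> {0..1}"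
  shows "- C / (1 - \<delta>) \<le> Vopt b"
proof -
  have "- C \<le> clipped_reward (\<lambda>_. p) x" for x
    using probB_in_unit[of x p] p_ge_half p_lt_1 C_pos
    unfolding clipped_reward_def rB_def by (auto simp: \<beta>_0 intro: mult_left_le)
  then have "- C / (1 - \<delta>) \<le> VB \<beta> p C \<delta> (\<lambda>_. p) b"
    by (rule VB_bounds(1)[OF const_policy assms])
  also have "\<dots> \<le> Vopt b"
    by (rule VB_le_Vopt[OF const_policy assms])
  finally show ?thesis .
qed

text \<open>Above \<open>p\<close> the planner can choose precision \<open>p\<close>, at no cost, and every agent then herds on \<open>G\<close>.\<close>
lemma Vopt_eq_0_above:
  assumes "p < b" "b \<le> 1"
  shows "Vopt b = 0"
proof -
  have "belief_dist (\<lambda>_. p) b n = return_pmf b" for n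
    by (induction n) (use assms in \<open>auto simp: trans_def bind_return_pmf\<close>)
  moreover have "rB \<beta> p C b p = 0"
    using assms \<beta>_0 unfolding rB_def probB_def by auto
  ultimately have "VB \<beta> p C \<delta> (\<lambda>_. p) b = 0"
    unfolding VB_def by simp
  then show ?thesis
    using VB_le_Vopt[OF const_policy, of b] Vopt_le_0[of b] assms p_ge_half by simp
qed

lemma exists_near_optimal_action:
  assumes "b \<in> {0..1}" "0 < \<epsilon>"
  shows "\<exists>q\<in>{1/2..1}. Vopt b - \<epsilon> < qvalue Vopt b q"
proof -
  obtain \<pi> where \<pi>: "\<pi> \<in> policies" "Vopt b - \<epsilon> < VB \<beta> p C \<delta> \<pi> b"
    using less_cSUP_iff[OF _ bdd_above_VB[OF assms(1)], of "Vopt b - \<epsilon>"] const_policy assms(2)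
    unfolding VB_opt_def by auto
  have q: "\<pi> b \<in> {1/2..1}"
    using policies_range[OF \<pi>(1) assms(1)] .
  have "VB \<beta> p C \<delta> \<pi> b \<le> qvalue Vopt b (\<pi> b)"
    unfolding VB_recursion[OF \<pi>(1) assms(1)]
    using q VB_le_Vopt[OF \<pi>(1)] by (intro qvalue_mono[OF assms(1)]) auto
  then show ?thesis
    using \<pi>(2) q by force
qed

text \<open>A policy that is \<open>\<epsilon>\<close>-greedy with respect to \<^const>\<open>Vopt\<close> loses at most \<open>\<epsilon>/(1-\<delta>)\<close>:
  the worst shortfall \<open>m\<close> over \<open>[0,1]\<close> satisfies \<open>m \<ge> \<delta> m - \<epsilon>\<close>.\<close>
lemma near_greedy_value:
  assumes \<pi>: "\<pi> \<in> policies"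
    and greedy: "\<And>x. x \<in> {0..1} \<Longrightarrow> Vopt x - \<epsilon> \<le> qvalue Vopt x (\<pi> x)"
    and b: "b \<in> {0..1}"
  shows "Vopt b - \<epsilon> / (1 - \<delta>) \<le> VB \<beta> p C \<delta> \<pi> b"
proof -
  define g where "g x = VB \<beta> p C \<delta> \<pi> x - Vopt x" for x
  define m where "m = Inf (g ` {0..1})"
  have "bdd_below (g ` {0..1})"
    using VB_bounds(1)[OF \<pi> _ clipped_reward_bounds(1)[OF \<pi>]] Vopt_le_0
    unfolding g_def by (intro bdd_belowI[where m="- reward_bound / (1 - \<delta>)"]) fastforce
  then have m_le: "m \<le> g x" if "x \<in> {0..1}" for x
    unfolding m_def using that by (intro cInf_lower) auto
  have "\<delta> * m - \<epsilon> \<le> g x" if x: "x \<in> {0..1}" for x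
  proof -
    have "qvalue (\<lambda>y. Vopt y + m) x (\<pi> x) \<le> qvalue (VB \<beta> p C \<delta> \<pi>) x (\<pi> x)"
    proof (rule qvalue_mono[OF x])
      show "\<pi> x \<in> {0..1}"
        using policies_range[OF \<pi> x] by auto
      show "Vopt y + m \<le> VB \<beta> p C \<delta> \<pi> y" if "y \<in> {0..1}" for y
        using m_le[OF that] unfolding g_def by simp
    qed
    then show ?thesis
      using greedy[OF x] unfolding qvalue_add_const VB_recursion[OF \<pi> x, symmetric] g_def
      by simp
  qed
  then have "\<delta> * m - \<epsilon> \<le> m"
    unfolding m_def by (intro cInf_greatest) auto
  then have "- \<epsilon> / (1 - \<delta>) \<le> m"
    using \<delta>_lt_1 by (simp add: field_simps)
  then show ?thesis
    using m_le[OF b] unfolding g_def by simp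
qed

text \<open>If some precision \<open>q\<close> beat \<^const>\<open>Vopt\<close> at \<open>b\<close> by \<open>c > 0\<close>, using it at \<open>b\<close>
  and an \<open>\<epsilon>\<close>-greedy choice elsewhere, with \<open>\<epsilon> = c(1-\<delta>)/2\<close>, would be worth more than \<^const>\<open>Vopt\<close> at \<open>b\<close>.\<close>
lemma qvalue_le_Vopt:
  assumes b: "b \<in> {0..1}" and q: "q \<in> {1/2..1}"
  shows "qvalue Vopt b q \<le> Vopt b"
proof (rule ccontr)
  define c where "c = qvalue Vopt b q - Vopt b"
  assume "\<not> qvalue Vopt b q \<le> Vopt b"
  then have c_pos: "0 < c"
    unfolding c_def by simp
  define \<epsilon> where "\<epsilon> = c * (1 - \<delta>) / 2"
  have \<epsilon>_pos: "0 < \<epsilon>"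
    unfolding \<epsilon>_def using c_pos \<delta>_lt_1 by simp
  define \<pi> where "\<pi> x = (if x = b then q else SOME q'. q' \<in> {1/2..1} \<and> Vopt x - \<epsilon> < qvalue Vopt x q')"
    for x
  have near: "\<pi> x \<in> {1/2..1} \<and> Vopt x - \<epsilon> < qvalue Vopt x (\<pi> x)" if "x \<in> {0..1}" "x \<noteq> b" for x
    unfolding \<pi>_def using someI_ex[OF exists_near_optimal_action[OF that(1) \<epsilon>_pos, unfolded Bex_def]] that
    by auto
  have \<pi>: "\<pi> \<in> policies"
    unfolding policies_def using near q by (auto simp: \<pi>_def)
  have greedy: "Vopt x - \<epsilon> \<le> qvalue Vopt x (\<pi> x)" if "x \<in> {0..1}" for x
    using near[OF that] c_pos \<epsilon>_pos unfolding c_def \<pi>_def by (cases "x = b") auto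
  have "qvalue (\<lambda>x. Vopt x + - (\<epsilon> / (1 - \<delta>))) b q \<le> qvalue (VB \<beta> p C \<delta> \<pi>) b q"
    using near_greedy_value[OF \<pi> greedy] q by (intro qvalue_mono[OF b]) auto
  also have "\<dots> = VB \<beta> p C \<delta> \<pi> b"
    using VB_recursion[OF \<pi> b] by (simp add: \<pi>_def)
  also have "\<dots> \<le> Vopt b"
    by (rule VB_le_Vopt[OF \<pi> b])
  finally have "c \<le> \<delta> * (\<epsilon> / (1 - \<delta>))"
    unfolding qvalue_add_const c_def by simp
  also have "\<dots> = \<delta> * c / 2"
    unfolding \<epsilon>_def using \<delta>_lt_1 by (simp add: field_simps)
  finally show False
    using c_pos \<delta>_lt_1 by simp
qed

text \<open>The precision used at \<open>y\<close> is \<open>q\<close> itself, except when \<open>x \<le> q < y\<close>: then it is \<open>y\<close>, which the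
  agent still follows, which is closer to \<open>p\<close> and hence cheaper, and which makes action \<open>B\<close> less likely.\<close>
lemma qvalue_dominated:
  assumes gap: "\<And>u v. 0 \<le> u \<Longrightarrow> u \<le> v \<Longrightarrow> v \<le> 1 \<Longrightarrow> Vopt u - Vopt v \<le> D"
    and xy: "x \<le> y" "y \<le> p" and q: "q \<in> {1/2..1}" and "1 - q \<le> x"
  shows "\<exists>q'\<in>{1/2..1}. qvalue Vopt x q - \<delta> * D \<le> qvalue Vopt y q'"
proof -
  have dominates: "qvalue Vopt x q - \<delta> * D \<le> qvalue Vopt y q'"
    if "rB \<beta> p C x q \<le> rB \<beta> p C y q'" "expect_next x q Vopt - expect_next y q' Vopt \<le> D" for q'
  proof -
    have "\<delta> * (expect_next x q Vopt - expect_next y q' Vopt) \<le> \<delta> * D"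
      using that(2) \<delta>_nonneg by (rule mult_left_mono)
    then show ?thesis
      using that(1) unfolding qvalue_def by (simp add: algebra_simps)
  qed
  consider "q < x" | "x \<le> q" "y \<le> q" | "x \<le> q" "q < y"
    by linarith
  then show ?thesis
  proof cases
    case 1
    then have "\<not> follows x q" "\<not> follows y q" "q < y"
      using xy unfolding follows_def by auto
    then have "qvalue Vopt x q - \<delta> * D \<le> qvalue Vopt y q"
      using 1 gap[of x y] xy q p_lt_1
      by (intro dominates) (simp_all add: rB_above expect_next_not_follows)
    then show ?thesis
      using q by blast
  next
    case 2
    have fx: "follows x q" and fy: "follows y q"
      using 2 xy assms(5) unfolding follows_def by auto
    have "rB \<beta> p C x q \<le> rB \<beta> p C y q"
      unfolding rB_follows[OF fx] rB_follows[OF fy]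
      using zz_antimono[OF xy(1), of q] q C_pos by (simp add: mult_left_mono)
    then have "qvalue Vopt x q - \<delta> * D \<le> qvalue Vopt y q"
      using expect_next_gap_same_precision[OF gap xy(1) q fx fy] by (rule dominates)
    then show ?thesis
      using q by blast
  next
    case 3
    have y: "y \<in> {1/2..1}" "y < 1"
      using 3 q xy p_lt_1 by auto
    have fx: "follows x q" and fy: "follows y y"
      using 3 y assms(5) unfolding follows_def by auto
    have "\<beta> (p - y) \<le> \<beta> (p - q)"
      using 3 q xy p_lt_1 by (intro mono_onD[OF \<beta>_mono]) auto
    moreover have "\<bar>y - p\<bar> = p - y" "\<bar>q - p\<bar> = p - q"
      using 3 xy by auto
    moreover have "C * zz y y \<le> C * zz x q"
      using zz_self_le[of x q y] 3 q C_pos by (simp add: mult_left_mono)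
    ultimately have "rB \<beta> p C x q \<le> rB \<beta> p C y y"
      unfolding rB_follows[OF fx] rB_follows[OF fy] by simp
    then have "qvalue Vopt x q - \<delta> * D \<le> qvalue Vopt y y"
      using expect_next_gap_self_precision[OF gap 3(2) y(2) q fx] by (rule dominates)
    then show ?thesis
      using y by blast
  qed
qed

lemma Vopt_gap_contraction:
  assumes gap: "\<And>u v. 0 \<le> u \<Longrightarrow> u \<le> v \<Longrightarrow> v \<le> 1 \<Longrightarrow> Vopt u - Vopt v \<le> D"
    and xy: "0 \<le> x" "x \<le> y" "y \<le> 1" and \<eta>: "0 < \<eta>"
  shows "Vopt x - Vopt y \<le> \<delta> * D + \<eta> / (1 - \<delta>)"
proof -
  have D: "0 \<le> \<delta> * D"
    using gap[of 0 0] \<delta>_nonneg by simp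
  have \<eta>_le: "\<eta> \<le> \<eta> / (1 - \<delta>)"
    using \<eta> \<delta>_nonneg \<delta>_lt_1 by (simp add: le_divide_eq)
  obtain q where q: "q \<in> {1/2..1}" and near: "Vopt x - \<eta> < qvalue Vopt x q"
    using exists_near_optimal_action[OF _ \<eta>, of x] xy by auto
  consider "p < y" | "x < 1 - q" | "y \<le> p" "1 - q \<le> x"
    by linarith
  then show ?thesis
  proof cases
    case 1
    then show ?thesis
      using Vopt_eq_0_above[OF 1 xy(3)] Vopt_le_0[of x] xy D \<eta>_le \<eta> by simp
  next
    case 2
    have "0 \<le> \<beta> \<bar>q - p\<bar>"
      using q p_ge_half p_lt_1 by (intro \<beta>_nonneg) (auto simp: abs_if)
    moreover have "\<not> follows x q"
      using 2 unfolding follows_def by simp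
    ultimately have "qvalue Vopt x q \<le> - C + \<delta> * Vopt x"
      using 2 q unfolding qvalue_def by (simp add: rB_below expect_next_not_follows)
    then have "(1 - \<delta>) * Vopt x < \<eta> - C"
      using near by (simp add: algebra_simps)
    moreover have "- C \<le> (1 - \<delta>) * Vopt y"
      using mult_left_mono[OF Vopt_ge[of y], of "1 - \<delta>"] xy \<delta>_lt_1 by simp
    ultimately have "(1 - \<delta>) * (Vopt x - Vopt y) < \<eta>"
      by (simp add: algebra_simps)
    then have "Vopt x - Vopt y < \<eta> / (1 - \<delta>)"
      using \<delta>_lt_1 by (simp add: less_divide_eq mult.commute)
    then show ?thesis
      using D by linarith
  next
    case 3
    obtain q' where q': "q' \<in> {1/2..1}" and "qvalue Vopt x q - \<delta> * D \<le> qvalue Vopt y q'"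
      using qvalue_dominated[OF gap xy(2) 3(1) q 3(2)] by blast
    moreover have "qvalue Vopt y q' \<le> Vopt y"
      using qvalue_le_Vopt[OF _ q'] xy by auto
    ultimately show ?thesis
      using near \<eta>_le by linarith
  qed
qed

lemma Vopt_mono:
  assumes "0 \<le> x" "x \<le> y" "y \<le> 1"
  shows "Vopt x \<le> Vopt y"
proof -
  define S where "S = {Vopt u - Vopt v | u v. 0 \<le> u \<and> u \<le> v \<and> v \<le> (1::real)}"
  define D where "D = Sup S"
  have "bdd_above S"
  proof (rule bdd_aboveI)
    fix z assume "z \<in> S"
    then obtain u v where "z = Vopt u - Vopt v" "0 \<le> u" "u \<le> v" "v \<le> 1"
      unfolding S_def by blast
    then show "z \<le> C / (1 - \<delta>)"
      using Vopt_le_0[of u] Vopt_ge[of v] by simp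
  qed
  then have gap: "Vopt u - Vopt v \<le> D" if "0 \<le> u" "u \<le> v" "v \<le> 1" for u v
    unfolding D_def S_def using that by (intro cSup_upper) auto
  have "(1 - \<delta>) * D \<le> 0 + e" if "0 < e" for e
  proof -
    have "Sup S \<le> \<delta> * D + e"
    proof (rule cSup_least)
      show "S \<noteq> {}"
        unfolding S_def by force
      fix z assume "z \<in> S"
      then obtain u v where "z = Vopt u - Vopt v" "0 \<le> u" "u \<le> v" "v \<le> 1"
        unfolding S_def by blast
      then show "z \<le> \<delta> * D + e"
        using Vopt_gap_contraction[OF gap, of u v "e * (1 - \<delta>)"] that \<delta>_lt_1 by simp
    qed
    then show ?thesis
      unfolding D_def[symmetric] by (simp add: algebra_simps)
  qed
  then have "D \<le> 0"
    using \<delta>_lt_1 field_le_epsilon[of "(1 - \<delta>) * D" 0] by (simp add: mult_le_0_iff)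
  then show ?thesis
    using gap[OF assms] by simp
qed

end

theorem lemma15:
  fixes \<beta> :: "real \<Rightarrow> real" and p C \<delta> b1 b2 :: real
  assumes "p \<in> {1/2..<1}"
    and "\<forall>x\<in>{0..1}. \<beta> x \<ge> 0"
    and "mono_on {0..1} \<beta>"
    and "continuous_on {0..1} \<beta>"
    and "concave_on {0..1} \<beta>"
    and "\<beta> 0 = 0"
    and "C > 0"
    and "\<delta> \<in> {0..<1}"
    and "b1 \<in> {0..1}" and "b2 \<in> {0..1}" and "b1 \<le> b2"
  shows "VB_opt \<beta> p C \<delta> b1 \<le> VB_opt \<beta> p C \<delta> b2"
proof -
  interpret biased_planner \<beta> p C \<delta>
    using assms(1-3,6-8) by unfold_locales auto
  show ?thesis
    using Vopt_mono assms(9-11) by auto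
qed

end
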